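(* Let $m<-n$. (1) For every $\rho\in\mathbb S^m(\mathbb R^n;\mathscr A_\theta)$, the operator $P_\rho$ is trace-class on $\mathcal H_\theta$. (2) The map $\rho\mapsto P_\rho$ is a continuous linear map from $\mathbb S^m(\mathbb R^n;\mathscr A_\theta)$ to the trace class $\mathscr L^1$ (with the trace norm). (3) For every $\rho\in\mathbb S^m(\mathbb R^n;\mathscr A_\theta)$, $$\operatorname{Trace}(P_\rho)=\sum_{k\in\mathbb Z^n}\tau\big[\rho(k)\big].$$
   Context: Fix $n\ge 2$ and a real antisymmetric $n\times n$ matrix $\theta$. The noncommutative torus $A_\theta$ is the $C^*$-algebra generated by unitaries $U_1,\dots,U_n$ with $U_kU_j=e^{2i\pi\theta_{jk}}U_jU_k$; $U^k=U_1^{k_1}\cdots U_n^{k_n}$; $\|\cdot\|$ is the $C^*$-norm; $\tau$ is the continuous trace on $A_\theta$ with $\tau(U^0)=1$, $\tau(U^k)=0$ for $k\neq0$. $\mathcal H_\theta$ is the Hilbert space completion of $A_\theta$ for $(u,v)=\tau(uv^* )$, with orthonormal basis $(U^k)_{k\in\mathbb Z^n}$. $\mathbb R^n$ acts by $*$-automorphisms $\alpha_s$ with $\alpha_s(U^k)=e^{is\cdot k}U^k$; $\mathscr A_\theta$ is the Fréchet algebra of smooth elements (the sums $\sum u_kU^k$ with $(u_k)$ rapidly decreasing; seminorms $u\mapsto\|\delta^\alpha u\|$ with $\delta_j(U^k)=k_jU^k$). $\mathbb S^m(\mathbb R^n;\mathscr A_\theta)$ is the Fréchet space of smooth $\rho:\mathbb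 R^n\to\mathscr A_\theta$ with $\|\delta^\alpha\partial_\xi^\beta\rho(\xi)\|\le C_{\alpha\beta}(1+|\xi|)^{m-|\beta|}$ (seminorms given by the best constants). $P_\rho$ is the pseudodifferential operator $P_\rho u=\iint e^{is\cdot\xi}\rho(\xi)\alpha_{-s}(u)\,ds\,(2\pi)^{-n}d\xi$ (oscillating integral), i.e. $P_\rho(\sum u_kU^k)=\sum u_k\rho(k)U^k$; for $m\le0$ it extends to a bounded operator on $\mathcal H_\theta$. *)

theory Defs
  imports "HOL-Analysis.Analysis"
begin

text \<open>Elements of the noncommutative torus are represented by their Fourier coefficients
  u :: int^'n => complex, i.e. u = sum_k u k U^k. The index type 'n (with its linear order)
  plays the role of {1..n}.\<close>

type_synonym 'n coef = "(int, 'n) vec \<Rightarrow> complex"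

definition rvec :: "(int, 'n::finite) vec \<Rightarrow> (real, 'n) vec" where
  "rvec k = (\<chi> i. real_of_int (k$i))"

text \<open>Phase: U^j U^k = phase theta j k * U^(j+k), computed from U_b U_a = e^(2 i pi theta_ab) U_a U_b.\<close>
definition phase :: "((real, 'n::{finite,linorder}) vec, 'n) vec \<Rightarrow> (int, 'n) vec \<Rightarrow> (int, 'n) vec \<Rightarrow> complex" where
  "phase \<theta> j k = cis (2 * pi * (\<Sum>a\<in>UNIV. \<Sum>b\<in>{b. a < b}.
       \<theta>$a$b * real_of_int (k$a) * real_of_int (j$b)))"

text \<open>Product in A_theta on coefficients (twisted convolution).\<close>
definition tmult :: "((real, 'n::{finite,linorder}) vec, 'n) vec \<Rightarrow> 'n coef \<Rightarrow> 'n coef \<Rightarrow> 'n coef" where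
  "tmult \<theta> u v = (\<lambda>l. \<Sum>\<^sub>\<infinity>j. u j * v (l - j) * phase \<theta> j (l - j))"

definition tau :: "'n::finite coef \<Rightarrow> complex" where
  "tau u = u 0"

text \<open>The Hilbert space H_theta, identified with l^2(Z^n) via the orthonormal basis U^k.\<close>
definition l2 :: "'n::finite coef \<Rightarrow> bool" where
  "l2 v \<longleftrightarrow> (\<lambda>k. (cmod (v k))^2) summable_on UNIV"

definition l2norm :: "'n::finite coef \<Rightarrow> real" where
  "l2norm v = sqrt (\<Sum>\<^sub>\<infinity>k. (cmod (v k))^2)"

definition l2inner :: "'n::finite coef \<Rightarrow> 'n coef \<Rightarrow> complex" where
  "l2inner u v = (\<Sum>\<^sub>\<infinity>k. u k * cnj (v k))"

definition basisv :: "(int, 'n::finite) vec \<Rightarrow> 'n coef" where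
  "basisv k = (\<lambda>j. if j = k then 1 else 0)"

text \<open>C*-norm: norm of left multiplication on H_theta (faithful GNS representation of tau).\<close>
definition cnorm :: "((real, 'n::{finite,linorder}) vec, 'n) vec \<Rightarrow> 'n coef \<Rightarrow> real" where
  "cnorm \<theta> u = Sup {l2norm (tmult \<theta> u v) | v. l2 v \<and> l2norm v \<le> 1}"

definition mdelta :: "('n::finite \<Rightarrow> nat) \<Rightarrow> 'n coef \<Rightarrow> 'n coef" where
  "mdelta \<alpha> u = (\<lambda>k. (\<Prod>l\<in>UNIV. of_int (k$l) ^ \<alpha> l) * u k)"

definition smooth_elem :: "'n::finite coef \<Rightarrow> bool" where
  "smooth_elem u \<longleftrightarrow> (\<forall>N::nat. \<exists>C. \<forall>k. (1 + norm (rvec k)) ^ N * cmod (u k) \<le> C)"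

text \<open>Partial derivative and continuity for maps R^n -> smooth elements (Frechet topology
  given by the seminorms u |-> ||delta^alpha u||).\<close>
definition ahas_partial :: "((real, 'n::{finite,linorder}) vec, 'n) vec \<Rightarrow> ((real, 'n) vec \<Rightarrow> 'n coef) \<Rightarrow> 'n
     \<Rightarrow> ((real, 'n) vec \<Rightarrow> 'n coef) \<Rightarrow> (real, 'n) vec \<Rightarrow> bool" where
  "ahas_partial \<theta> f l g \<xi> \<longleftrightarrow> (\<forall>\<alpha>. ((\<lambda>t. cnorm \<theta> (mdelta \<alpha>
       (\<lambda>k. (f (\<xi> + t *\<^sub>R axis l 1) k - f \<xi> k) / complex_of_real t - g \<xi> k))) \<longlongrightarrow> 0) (at 0))"

definition acont :: "((real, 'n::{finite,linorder}) vec, 'n) vec \<Rightarrow> ((real, 'n) vec \<Rightarrow> 'n coef) \<Rightarrow> (real, 'n) vec \<Rightarrow> bool" where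
  "acont \<theta> f \<xi> \<longleftrightarrow> (\<forall>\<alpha>. ((\<lambda>\<eta>. cnorm \<theta> (mdelta \<alpha> (\<lambda>k. f \<eta> k - f \<xi> k))) \<longlongrightarrow> 0) (at \<xi>))"

text \<open>D is the family of all iterated partial derivatives (D beta = partial^beta rho) of a smooth
  map rho : R^n -> A_theta-smooth.\<close>
definition deriv_family :: "((real, 'n::{finite,linorder}) vec, 'n) vec \<Rightarrow> ((real, 'n) vec \<Rightarrow> 'n coef)
     \<Rightarrow> (('n \<Rightarrow> nat) \<Rightarrow> (real, 'n) vec \<Rightarrow> 'n coef) \<Rightarrow> bool" where
  "deriv_family \<theta> \<rho> D \<longleftrightarrow> D (\<lambda>_. 0) = \<rho> \<and>
     (\<forall>\<beta> \<xi>. smooth_elem (D \<beta> \<xi>) \<and> acont \<theta> (D \<beta>) \<xi>) \<and>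
     (\<forall>\<beta> l \<xi>. ahas_partial \<theta> (D \<beta>) l (D (\<beta>(l := Suc (\<beta> l)))) \<xi>)"

definition sderiv :: "((real, 'n::{finite,linorder}) vec, 'n) vec \<Rightarrow> ((real, 'n) vec \<Rightarrow> 'n coef) \<Rightarrow> ('n \<Rightarrow> nat) \<Rightarrow> (real, 'n) vec \<Rightarrow> 'n coef" where
  "sderiv \<theta> \<rho> = (SOME D. deriv_family \<theta> \<rho> D)"

definition symbol_class :: "((real, 'n::{finite,linorder}) vec, 'n) vec \<Rightarrow> real \<Rightarrow> ((real, 'n) vec \<Rightarrow> 'n coef) set" where
  "symbol_class \<theta> m = {\<rho>. \<exists>D. deriv_family \<theta> \<rho> D \<and>
     (\<forall>\<alpha> \<beta>. \<exists>C. \<forall>\<xi>. cnorm \<theta> (mdelta \<alpha> (D \<beta> \<xi>))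
        \<le> C * (1 + norm \<xi>) powr (m - real (sum \<beta> UNIV)))}"

definition sym_seminorm :: "((real, 'n::{finite,linorder}) vec, 'n) vec \<Rightarrow> real \<Rightarrow> ('n \<Rightarrow> nat) \<Rightarrow> ('n \<Rightarrow> nat)
     \<Rightarrow> ((real, 'n) vec \<Rightarrow> 'n coef) \<Rightarrow> real" where
  "sym_seminorm \<theta> m \<alpha> \<beta> \<rho> = (SUP \<xi>. cnorm \<theta> (mdelta \<alpha> (sderiv \<theta> \<rho> \<beta> \<xi>))
        / (1 + norm \<xi>) powr (m - real (sum \<beta> UNIV)))"

text \<open>The pseudodifferential operator P_rho on H_theta: P_rho(sum v_k U^k) = sum v_k rho(k) U^k.\<close>
definition psido :: "((real, 'n::{finite,linorder}) vec, 'n) vec \<Rightarrow> ((real, 'n) vec \<Rightarrow> 'n coef) \<Rightarrow> 'n coef \<Rightarrow> 'n coef" where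
  "psido \<theta> \<rho> v = (\<lambda>l. \<Sum>\<^sub>\<infinity>k. v k * \<rho> (rvec k) (l - k) * phase \<theta> (l - k) k)"

definition l2_linear :: "('n::finite coef \<Rightarrow> 'n coef) \<Rightarrow> bool" where
  "l2_linear T \<longleftrightarrow> (\<forall>v. l2 v \<longrightarrow> l2 (T v)) \<and>
     (\<forall>u v a b. l2 u \<longrightarrow> l2 v \<longrightarrow> T (\<lambda>k. a * u k + b * v k) = (\<lambda>k. a * T u k + b * T v k))"

definition orthonormal_sys :: "(nat \<Rightarrow> 'n::finite coef) \<Rightarrow> nat \<Rightarrow> bool" where
  "orthonormal_sys e N \<longleftrightarrow> (\<forall>i<N. l2 (e i) \<and> (\<forall>j<N. l2inner (e i) (e j) = (if i = j then 1 else 0)))"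

definition trace_sums :: "('n::finite coef \<Rightarrow> 'n coef) \<Rightarrow> real set" where
  "trace_sums T = {\<Sum>i<N. cmod (l2inner (T (e i)) (f i)) | N e f.
       orthonormal_sys e N \<and> orthonormal_sys f N}"

definition trace_class :: "('n::finite coef \<Rightarrow> 'n coef) \<Rightarrow> bool" where
  "trace_class T \<longleftrightarrow> l2_linear T \<and> bdd_above (trace_sums T)"

definition trace_norm :: "('n::finite coef \<Rightarrow> 'n coef) \<Rightarrow> real" where
  "trace_norm T = Sup (trace_sums T)"

definition op_trace :: "('n::finite coef \<Rightarrow> 'n coef) \<Rightarrow> complex" where
  "op_trace T = (\<Sum>\<^sub>\<infinity>k. l2inner (T (basisv k)) (basisv k))"

end

theory Submission
  imports Defs
begin

text \<open>\<open>P\<^sub>\<rho>\<close> maps \<open>U\<^sup>k\<close> to \<open>\<rho>(k) U\<^sup>k\<close>, a vector of \<open>\<ell>\<^sup>2\<close>-norm \<open>\<parallel>\<rho>(k)\<parallel>\<^sub>2 \<le> \<parallel>\<rho>(k)\<parallel> \<le> p(\<rho>) (1 + |k|)\<^sup>m\<close>,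
  where \<open>p\<close> is the seminorm of order zero. An operator whose columns \<open>w\<^sub>k\<close> have summable norms is
  trace class with trace norm at most \<open>\<Sum>\<^sub>k \<parallel>w\<^sub>k\<parallel>\<close>: for orthonormal systems \<open>e\<^sub>i\<close>, \<open>f\<^sub>i\<close> one has
  \<open>\<langle>P e\<^sub>i, f\<^sub>i\<rangle> = \<Sum>\<^sub>k e\<^sub>i(k) \<langle>w\<^sub>k, f\<^sub>i\<rangle>\<close>, and Cauchy-Schwarz in \<open>i\<close> followed by Bessel's inequality
  in both factors bounds \<open>\<Sum>\<^sub>i |\<langle>P e\<^sub>i, f\<^sub>i\<rangle>|\<close> by \<open>\<Sum>\<^sub>k \<parallel>w\<^sub>k\<parallel>\<close>. Its trace is \<open>\<Sum>\<^sub>k \<langle>w\<^sub>k, U\<^sup>k\<rangle> = \<Sum>\<^sub>k \<tau>(\<rho>(k))\<close>.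
  Everything is therefore controlled by \<open>\<Sum>\<^sub>k (1 + |k|)\<^sup>m\<close>, which is finite exactly because \<open>m < -n\<close>.\<close>

lemma has_sum_sum:
  fixes f :: "'i \<Rightarrow> 'a \<Rightarrow> 'b::topological_comm_monoid_add"
  assumes "finite I" and "\<And>i. i \<in> I \<Longrightarrow> (f i has_sum s i) A"
  shows "((\<lambda>x. \<Sum>i\<in>I. f i x) has_sum (\<Sum>i\<in>I. s i)) A"
  using assms by (induction I rule: finite_induct) (auto intro!: has_sum_add)

lemma has_sum_diff:
  fixes f g :: "'a \<Rightarrow> 'b::topological_ab_group_add"
  assumes "(f has_sum a) A" and "(g has_sum b) A"
  shows "((\<lambda>x. f x - g x) has_sum (a - b)) A"
proof -
  have "((\<lambda>x. - g x) has_sum - b) A"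
    using assms(2) by (simp add: has_sum_uminus)
  from has_sum_add[OF assms(1) this] show ?thesis
    by simp
qed

lemma
  fixes f :: "'i \<Rightarrow> 'a \<Rightarrow> 'b::{topological_comm_monoid_add, t2_space}"
  assumes "finite I" and "\<And>i. i \<in> I \<Longrightarrow> f i summable_on A"
  shows summable_on_sum: "(\<lambda>x. \<Sum>i\<in>I. f i x) summable_on A"
    and infsum_sum: "infsum (\<lambda>x. \<Sum>i\<in>I. f i x) A = (\<Sum>i\<in>I. infsum (f i) A)"
proof -
  have "((\<lambda>x. \<Sum>i\<in>I. f i x) has_sum (\<Sum>i\<in>I. infsum (f i) A)) A"
    using assms by (intro has_sum_sum has_sum_infsum)
  then show "(\<lambda>x. \<Sum>i\<in>I. f i x) summable_on A"
    and "infsum (\<lambda>x. \<Sum>i\<in>I. f i x) A = (\<Sum>i\<in>I. infsum (f i) A)"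
    by (auto simp: has_sum_iff)
qed

lemma infsum_if_eq: "(\<Sum>\<^sub>\<infinity>j. if j = a then c else 0) = (c::'b::{comm_monoid_add, t2_space})"
proof -
  have "(\<Sum>\<^sub>\<infinity>j. if j = a then c else 0) = (\<Sum>\<^sub>\<infinity>j\<in>{a}. c)"
    by (rule infsum_cong_neutral) auto
  then show ?thesis by simp
qed

section \<open>Lattice sums\<close>

lemma summable_on_one_plus_abs_int_powr:
  assumes "s < -1"
  shows "(\<lambda>j::int. (1 + \<bar>real_of_int j\<bar>) powr s) summable_on UNIV"
proof -
  let ?f = "\<lambda>j::int. (1 + \<bar>real_of_int j\<bar>) powr s"
  have "summable (\<lambda>n::nat. real (Suc n) powr s)"
    using assms summable_real_powr_iff[of s] by (subst summable_Suc_iff) blast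
  then have nat: "(\<lambda>n::nat. (1 + real n) powr s) summable_on UNIV"
    by (subst summable_on_UNIV_nonneg_real_iff) (auto simp: add.commute)
  have "?f summable_on range int"
    using nat by (subst summable_on_reindex) (auto simp: o_def)
  moreover have "?f summable_on range (\<lambda>n. - int n)"
    using nat by (subst summable_on_reindex) (auto simp: o_def inj_on_def)
  ultimately have "?f summable_on (range int \<union> range (\<lambda>n. - int n))"
    by (rule summable_on_union)
  moreover have "range int \<union> range (\<lambda>n. - int n) = UNIV"
    by (auto simp: image_def intro: int_cases2)
  ultimately show ?thesis by simp
qed

lemma summable_on_prod_vec_components:
  fixes \<phi> :: "int \<Rightarrow> real"
  assumes nonneg: "\<And>j. \<phi> j \<ge> 0" and summable: "\<phi> summable_on UNIV"
  shows "(\<lambda>k::(int, 'n::finite) vec. \<Prod>i\<in>UNIV. \<phi> (k$i)) summable_on UNIV"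
proof (rule nonneg_bdd_above_summable_on)
  show "0 \<le> (\<Prod>i\<in>UNIV. \<phi> (k$i))" for k :: "(int, 'n) vec"
    using nonneg by (simp add: prod_nonneg)
  show "bdd_above (sum (\<lambda>k::(int, 'n) vec. \<Prod>i\<in>UNIV. \<phi> (k$i)) ` {F. F \<subseteq> UNIV \<and> finite F})"
  proof (rule bdd_aboveI2)
    fix F :: "(int, 'n) vec set"
    assume "F \<in> {F. F \<subseteq> UNIV \<and> finite F}"
    then have "finite F" by simp
    define P where "P i = (\<lambda>k. k$i) ` F" for i
    have finite_P: "finite (P i)" for i
      using \<open>finite F\<close> by (simp add: P_def)
    have "(\<Sum>k\<in>F. \<Prod>i\<in>UNIV. \<phi> (k$i)) = (\<Sum>g\<in>vec_nth ` F. \<Prod>i\<in>UNIV. \<phi> (g i))"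
      by (subst sum.reindex) (auto simp: inj_on_def vec_eq_iff)
    also have "\<dots> \<le> (\<Sum>g\<in>PiE UNIV P. \<Prod>i\<in>UNIV. \<phi> (g i))"
      using nonneg finite_P by (intro sum_mono2) (auto simp: P_def finite_PiE prod_nonneg)
    also have "\<dots> = (\<Prod>i\<in>UNIV. \<Sum>j\<in>P i. \<phi> j)"
      using finite_P by (simp add: prod_sum_PiE)
    also have "\<dots> \<le> (\<Prod>i\<in>(UNIV::'n set). infsum \<phi> UNIV)"
      using nonneg finite_P summable
      by (intro prod_mono) (auto intro!: sum_nonneg finite_sum_le_infsum)
    finally show "(\<Sum>k\<in>F. \<Prod>i\<in>UNIV. \<phi> (k$i)) \<le> (\<Prod>i\<in>(UNIV::'n set). infsum \<phi> UNIV)" .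
  qed
qed

lemma abs_component_le_norm_rvec: "\<bar>real_of_int (k$i)\<bar> \<le> norm (rvec k)"
  using component_le_norm_cart[of "rvec k" i] by (simp add: rvec_def)

text \<open>The lattice estimate behind \<open>m < -n\<close>: \<open>(1 + |k|)\<^sup>n\<close> dominates \<open>\<Prod>\<^sub>i (1 + |k\<^sub>i|)\<close>, so the sum
  over \<open>\<int>\<^sup>n\<close> factors into \<open>n\<close> convergent sums over \<open>\<int>\<close> with exponent \<open>m / n < -1\<close>.\<close>
lemma summable_on_lattice_weight:
  assumes m: "m < - real CARD('n::finite)"
  shows "(\<lambda>k::(int, 'n) vec. (1 + norm (rvec k)) powr m) summable_on UNIV"
proof -
  define n where "n = real CARD('n)"
  define s where "s = m / n"
  have "n > 0" by (simp add: n_def)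
  then have "s < -1" using m by (simp add: s_def n_def divide_less_eq)
  have "(\<lambda>k::(int, 'n) vec. \<Prod>i\<in>UNIV. (1 + \<bar>real_of_int (k$i)\<bar>) powr s) summable_on UNIV"
    using summable_on_one_plus_abs_int_powr[OF \<open>s < -1\<close>]
    by (intro summable_on_prod_vec_components) auto
  then show ?thesis
  proof (rule summable_on_comparison_test)
    fix k :: "(int, 'n) vec"
    have "(\<Prod>i\<in>UNIV. 1 + \<bar>real_of_int (k$i)\<bar>) \<le> (\<Prod>i\<in>(UNIV::'n set). 1 + norm (rvec k))"
      by (intro prod_mono) (auto intro: abs_component_le_norm_rvec)
    also have "\<dots> = (1 + norm (rvec k)) powr n"
      by (simp add: n_def powr_realpow add_pos_nonneg)
    finally have le: "(\<Prod>i\<in>UNIV. 1 + \<bar>real_of_int (k$i)\<bar>) \<le> (1 + norm (rvec k)) powr n" .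
    have pos: "0 < (\<Prod>i\<in>UNIV. 1 + \<bar>real_of_int (k$i)\<bar>)"
      by (intro prod_pos) auto
    have "(1 + norm (rvec k)) powr m = ((1 + norm (rvec k)) powr n) powr s"
      using \<open>n > 0\<close> by (simp add: powr_powr s_def)
    also have "\<dots> \<le> (\<Prod>i\<in>UNIV. 1 + \<bar>real_of_int (k$i)\<bar>) powr s"
      using \<open>s < -1\<close> pos le by (intro powr_mono2') auto
    also have "\<dots> = (\<Prod>i\<in>UNIV. (1 + \<bar>real_of_int (k$i)\<bar>) powr s)"
      by (rule prod_powr_distrib)
    finally show "(1 + norm (rvec k)) powr m \<le> (\<Prod>i\<in>UNIV. (1 + \<bar>real_of_int (k$i)\<bar>) powr s)" .
  qed simp
qed

section \<open>The sequence space \<open>\<ell>\<^sup>2(\<int>\<^sup>n)\<close>\<close>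

lemma norm_phase [simp]: "cmod (phase \<theta> j k) = 1"
  by (simp add: phase_def)

lemma l2norm_nonneg: "l2norm v \<ge> 0"
  by (simp add: l2norm_def infsum_nonneg)

lemma l2norm_squared: "(l2norm v)^2 = (\<Sum>\<^sub>\<infinity>k. (cmod (v k))^2)"
  by (simp add: l2norm_def infsum_nonneg)

lemma L2_set_le_l2norm:
  assumes "l2 v" and "finite F"
  shows "L2_set (\<lambda>k. cmod (v k)) F \<le> l2norm v"
  unfolding L2_set_def l2norm_def
  using assms by (intro real_sqrt_le_mono finite_sum_le_infsum) (auto simp: l2_def)

lemma norm_le_l2norm:
  assumes "l2 v"
  shows "cmod (v k) \<le> l2norm v"
  using L2_set_le_l2norm[OF assms, of "{k}"] by simp

lemma l2_l2norm_le_if_finite_sums_le: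
  assumes "B \<ge> 0" and "\<And>F. finite F \<Longrightarrow> (\<Sum>k\<in>F. (cmod (v k))^2) \<le> B^2"
  shows "l2 v" and "l2norm v \<le> B"
proof -
  show "l2 v"
    unfolding l2_def using assms(2) by (intro nonneg_bdd_above_summable_on bdd_aboveI2) auto
  then have "(\<Sum>\<^sub>\<infinity>k. (cmod (v k))^2) \<le> B^2"
    unfolding l2_def using assms(2) by (intro infsum_le_finite_sums) auto
  then have "l2norm v \<le> sqrt (B^2)"
    unfolding l2norm_def by (rule real_sqrt_le_mono)
  then show "l2norm v \<le> B"
    using assms(1) by simp
qed

lemma l2_cmod_cong:
  assumes "\<And>l. cmod (u l) = cmod (v l)"
  shows "l2 u \<longleftrightarrow> l2 v" and "l2norm u = l2norm v"
  using assms by (simp_all add: l2_def l2norm_def)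

lemma l2_scale:
  assumes "l2 v"
  shows "l2 (\<lambda>k. c * v k)" and "l2norm (\<lambda>k. c * v k) = cmod c * l2norm v"
proof -
  have sq: "(cmod (c * v k))^2 = (cmod c)^2 * (cmod (v k))^2" for k
    by (simp add: norm_mult power_mult_distrib)
  show "l2 (\<lambda>k. c * v k)"
    using assms unfolding l2_def sq by (rule summable_on_cmult_right)
  show "l2norm (\<lambda>k. c * v k) = cmod c * l2norm v"
    unfolding l2norm_def sq by (simp add: infsum_cmult_right' real_sqrt_mult)
qed

lemma l2_shift_unimodular:
  fixes v :: "'n::finite coef"
  assumes "l2 v" and "\<And>l. cmod (p l) = 1"
  shows "l2 (\<lambda>l. v (l - j) * p l)" and "l2norm (\<lambda>l. v (l - j) * p l) = l2norm v"
proof -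
  have bij: "bij_betw (\<lambda>l. l - j) UNIV UNIV"
    by (auto simp: bij_betw_def inj_on_def image_def intro!: exI[of _ "_ + j"])
  have cmod_eq: "cmod (v (l - j) * p l) = cmod (v (l - j))" for l
    by (simp add: norm_mult assms(2))
  show "l2 (\<lambda>l. v (l - j) * p l)"
    using assms(1) summable_on_reindex_bij_betw[OF bij, of "\<lambda>k. (cmod (v k))^2"]
    by (simp add: l2_cmod_cong(1)[OF cmod_eq] l2_def)
  show "l2norm (\<lambda>l. v (l - j) * p l) = l2norm v"
    using infsum_reindex_bij_betw[OF bij, of "\<lambda>k. (cmod (v k))^2"]
    by (simp add: l2_cmod_cong(2)[OF cmod_eq] l2norm_def)
qed

lemma summable_on_l2_products:
  assumes "l2 u" and "l2 v"
  shows "(\<lambda>k. cmod (u k) * cmod (v k)) summable_on UNIV"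
proof (rule summable_on_comparison_test)
  show "(\<lambda>k. (cmod (u k))^2 + (cmod (v k))^2) summable_on UNIV"
    using assms unfolding l2_def by (rule summable_on_add)
  show "cmod (u k) * cmod (v k) \<le> (cmod (u k))^2 + (cmod (v k))^2" for k
    using sum_squares_bound[of "cmod (u k)" "cmod (v k)"] mult_nonneg_nonneg[OF norm_ge_zero norm_ge_zero, of "u k" "v k"]
    unfolding power2_eq_square by linarith
qed simp

lemma infsum_l2_products_le:
  assumes "l2 u" and "l2 v"
  shows "(\<Sum>\<^sub>\<infinity>k. cmod (u k) * cmod (v k)) \<le> l2norm u * l2norm v"
proof (rule infsum_le_finite_sums[OF summable_on_l2_products[OF assms]])
  fix F :: "(int, 'a) vec set"
  assume "finite F"
  have "(\<Sum>k\<in>F. cmod (u k) * cmod (v k)) \<le> L2_set (\<lambda>k. cmod (u k)) F * L2_set (\<lambda>k. cmod (v k)) F"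
    using L2_set_mult_ineq[of "\<lambda>k. cmod (u k)" "\<lambda>k. cmod (v k)" F] by simp
  also have "\<dots> \<le> l2norm u * l2norm v"
    using assms \<open>finite F\<close> by (intro mult_mono L2_set_le_l2norm) (auto simp: l2norm_nonneg)
  finally show "(\<Sum>k\<in>F. cmod (u k) * cmod (v k)) \<le> l2norm u * l2norm v" .
qed

lemma has_sum_l2inner:
  assumes "l2 u" and "l2 v"
  shows "((\<lambda>k. u k * cnj (v k)) has_sum l2inner u v) UNIV"
proof -
  have "(\<lambda>k. norm (u k * cnj (v k))) summable_on UNIV"
    using summable_on_l2_products[OF assms] by (simp add: norm_mult)
  then show ?thesis
    unfolding l2inner_def by (intro has_sum_infsum) (rule abs_summable_summable)
qed

lemma norm_l2inner_le:
  assumes "l2 u" and "l2 v"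
  shows "cmod (l2inner u v) \<le> l2norm u * l2norm v"
proof -
  have "cmod (l2inner u v) \<le> (\<Sum>\<^sub>\<infinity>k. cmod (u k) * cmod (v k))"
    unfolding l2inner_def using norm_infsum_bound[of "\<lambda>k. u k * cnj (v k)" UNIV]
      summable_on_l2_products[OF assms] by (simp add: norm_mult)
  also have "\<dots> \<le> l2norm u * l2norm v"
    by (rule infsum_l2_products_le[OF assms])
  finally show ?thesis .
qed

lemma l2inner_self:
  assumes "l2 u"
  shows "l2inner u u = complex_of_real ((l2norm u)^2)"
proof -
  have "((\<lambda>k. complex_of_real ((cmod (u k))^2)) has_sum complex_of_real ((l2norm u)^2)) UNIV"
    using assms by (intro has_sum_of_real) (simp add: l2_def l2norm_squared)
  moreover have "(\<lambda>k. u k * cnj (u k)) = (\<lambda>k. complex_of_real ((cmod (u k))^2))"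
    by (simp only: complex_norm_square)
  ultimately have "((\<lambda>k. u k * cnj (u k)) has_sum complex_of_real ((l2norm u)^2)) UNIV"
    by simp
  then show ?thesis
    by (rule has_sum_unique[OF has_sum_l2inner[OF assms assms]])
qed

text \<open>Writing \<open>y = \<Sum>\<^sub>j x\<^sub>j\<close>, Cauchy-Schwarz gives
  \<open>S = \<Sum>\<^sub>F |y|\<^sup>2 \<le> \<Sum>\<^sub>j \<Sum>\<^sub>F |x\<^sub>j| |y| \<le> (\<Sum>\<^sub>j \<parallel>x\<^sub>j\<parallel>) \<surd>S\<close>, hence \<open>S \<le> (\<Sum>\<^sub>j \<parallel>x\<^sub>j\<parallel>)\<^sup>2\<close>.\<close>
lemma finite_sum_norm_infsum_squared_le:
  fixes x :: "'j \<Rightarrow> 'n::finite coef"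
  assumes l2: "\<And>j. l2 (x j)" and summable: "(\<lambda>j. l2norm (x j)) summable_on UNIV" and "finite F"
  shows "(\<Sum>l\<in>F. (cmod (\<Sum>\<^sub>\<infinity>j. x j l))^2) \<le> (\<Sum>\<^sub>\<infinity>j. l2norm (x j))^2"
proof -
  define y where "y l = (\<Sum>\<^sub>\<infinity>j. x j l)" for l
  define A where "A = (\<Sum>\<^sub>\<infinity>j. l2norm (x j))"
  define S where "S = (\<Sum>l\<in>F. (cmod (y l))^2)"
  have "A \<ge> 0" and "S \<ge> 0"
    by (simp_all add: A_def S_def infsum_nonneg l2norm_nonneg sum_nonneg)
  have abs_summable: "(\<lambda>j. cmod (x j l)) summable_on UNIV" for l
    using summable by (rule summable_on_comparison_test) (auto intro: norm_le_l2norm l2)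
  have "S \<le> (\<Sum>l\<in>F. (\<Sum>\<^sub>\<infinity>j. cmod (x j l)) * cmod (y l))"
    unfolding S_def power2_eq_square y_def
    using abs_summable by (intro sum_mono mult_right_mono norm_infsum_bound) auto
  also have "\<dots> = (\<Sum>\<^sub>\<infinity>j. \<Sum>l\<in>F. cmod (x j l) * cmod (y l))"
    using \<open>finite F\<close> abs_summable
    by (subst infsum_sum) (auto simp: infsum_cmult_left' intro: summable_on_cmult_left)
  also have "\<dots> \<le> (\<Sum>\<^sub>\<infinity>j. l2norm (x j) * sqrt S)"
  proof (rule infsum_mono)
    show "(\<lambda>j. \<Sum>l\<in>F. cmod (x j l) * cmod (y l)) summable_on UNIV"
      using \<open>finite F\<close> abs_summable by (intro summable_on_sum summable_on_cmult_left)
    show "(\<lambda>j. l2norm (x j) * sqrt S) summable_on UNIV"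
      using summable by (rule summable_on_cmult_left)
    fix j
    have "(\<Sum>l\<in>F. cmod (x j l) * cmod (y l)) \<le> L2_set (\<lambda>l. cmod (x j l)) F * L2_set (\<lambda>l. cmod (y l)) F"
      using L2_set_mult_ineq[of "\<lambda>l. cmod (x j l)" "\<lambda>l. cmod (y l)" F] by simp
    also have "\<dots> = L2_set (\<lambda>l. cmod (x j l)) F * sqrt S"
      by (simp add: S_def L2_set_def)
    also have "\<dots> \<le> l2norm (x j) * sqrt S"
      using l2 \<open>finite F\<close> \<open>S \<ge> 0\<close> by (intro mult_right_mono L2_set_le_l2norm) auto
    finally show "(\<Sum>l\<in>F. cmod (x j l) * cmod (y l)) \<le> l2norm (x j) * sqrt S" .
  qed
  also have "\<dots> = A * sqrt S"
    by (simp add: A_def infsum_cmult_left')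
  finally have "sqrt S * sqrt S \<le> A * sqrt S"
    using \<open>S \<ge> 0\<close> by simp
  then have "sqrt S \<le> A"
    using \<open>A \<ge> 0\<close> \<open>S \<ge> 0\<close> mult_right_le_imp_le[of "sqrt S" "sqrt S" A] by (cases "S = 0") auto
  then show ?thesis
    using power_mono[of "sqrt S" A 2] \<open>S \<ge> 0\<close> by (simp add: S_def y_def A_def)
qed

lemma l2_infsum:
  fixes x :: "'j \<Rightarrow> 'n::finite coef"
  assumes "\<And>j. l2 (x j)" and "(\<lambda>j. l2norm (x j)) summable_on UNIV"
  shows "l2 (\<lambda>l. \<Sum>\<^sub>\<infinity>j. x j l)" and "l2norm (\<lambda>l. \<Sum>\<^sub>\<infinity>j. x j l) \<le> (\<Sum>\<^sub>\<infinity>j. l2norm (x j))"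
  using l2_l2norm_le_if_finite_sums_le[OF infsum_nonneg finite_sum_norm_infsum_squared_le[OF assms]]
  by (simp_all add: l2norm_nonneg)

lemma has_sum_l2inner_infsum:
  fixes x :: "'j \<Rightarrow> 'n::finite coef"
  assumes l2: "\<And>j. l2 (x j)" and summable: "(\<lambda>j. l2norm (x j)) summable_on UNIV" and "l2 f"
  shows "((\<lambda>j. l2inner (x j) f) has_sum l2inner (\<lambda>l. \<Sum>\<^sub>\<infinity>j. x j l) f) UNIV"
proof -
  define g where "g = (\<lambda>(j, l). x j l * cnj (f l))"
  have rows: "(\<lambda>l. norm (g (j, l))) summable_on UNIV" for j
    using summable_on_l2_products[OF l2 \<open>l2 f\<close>] by (simp add: g_def norm_mult)
  have "(\<lambda>j. \<Sum>\<^sub>\<infinity>l. norm (g (j, l))) summable_on UNIV"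
  proof (rule summable_on_comparison_test)
    show "(\<lambda>j. l2norm (x j) * l2norm f) summable_on UNIV"
      using summable by (rule summable_on_cmult_left)
    show "(\<Sum>\<^sub>\<infinity>l. norm (g (j, l))) \<le> l2norm (x j) * l2norm f" for j
      using infsum_l2_products_le[OF l2 \<open>l2 f\<close>] by (simp add: g_def norm_mult)
  qed (simp add: infsum_nonneg)
  then have "(\<lambda>p. norm (g p)) summable_on UNIV \<times> UNIV"
    using rows by (intro Infinite_Sum.abs_summable_on_Sigma_iff[THEN iffD2]) (simp add: infsum_nonneg)
  then have g: "(\<lambda>(j, l). x j l * cnj (f l)) summable_on UNIV \<times> UNIV"
    unfolding g_def by (rule abs_summable_summable)
  have "l2inner (\<lambda>l. \<Sum>\<^sub>\<infinity>j. x j l) f = (\<Sum>\<^sub>\<infinity>l. \<Sum>\<^sub>\<infinity>j. x j l * cnj (f l))"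
    by (simp add: l2inner_def infsum_cmult_left')
  also have "\<dots> = (\<Sum>\<^sub>\<infinity>j. l2inner (x j) f)"
    using infsum_swap_banach[OF g] by (simp add: l2inner_def)
  finally show ?thesis
    using summable_on_Sigma_banach[OF g] by (simp add: l2inner_def)
qed

lemma l2_basisv: "l2 (basisv k)"
  unfolding l2_def basisv_def
  by (rule finite_nonzero_values_imp_summable_on) (rule finite_subset[of _ "{k}"], auto)

lemma l2norm_basisv: "l2norm (basisv k) = 1"
proof -
  have "(\<lambda>j. (cmod (basisv k j))^2) = (\<lambda>j. if j = k then 1 else 0)"
    by (auto simp: basisv_def)
  then show ?thesis
    by (simp add: l2norm_def infsum_if_eq)
qed

lemma l2inner_basisv_left: "l2inner (basisv k) v = cnj (v k)"
proof -
  have "l2inner (basisv k) v = (\<Sum>\<^sub>\<infinity>j. if j = k then cnj (v k) else 0)"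
    unfolding l2inner_def by (rule infsum_cong) (simp add: basisv_def)
  then show ?thesis
    by (simp add: infsum_if_eq)
qed

lemma l2inner_basisv_right: "l2inner u (basisv k) = u k"
proof -
  have "l2inner u (basisv k) = (\<Sum>\<^sub>\<infinity>j. if j = k then u k else 0)"
    unfolding l2inner_def by (rule infsum_cong) (simp add: basisv_def)
  then show ?thesis
    by (simp add: infsum_if_eq)
qed

lemma orthonormal_sys_l2norm:
  assumes "orthonormal_sys e N" and "i < N"
  shows "l2 (e i)" and "l2norm (e i) = 1"
proof -
  show "l2 (e i)"
    using assms by (simp add: orthonormal_sys_def)
  moreover have "l2inner (e i) (e i) = 1"
    using assms by (simp add: orthonormal_sys_def)
  ultimately have "complex_of_real ((l2norm (e i))^2) = 1"
    by (simp only: l2inner_self)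
  then have "(l2norm (e i))^2 = 1"
    by (rule of_real_eq_1_iff[THEN iffD1])
  then show "l2norm (e i) = 1"
    using l2norm_nonneg[of "e i"] by (simp add: power2_eq_1_iff)
qed

lemma has_sum_orthonormal_combination_squared:
  assumes f: "orthonormal_sys f N"
  shows "((\<lambda>k. (\<Sum>i<N. c i * f i k) * cnj (\<Sum>i<N. c i * f i k)) has_sum
      complex_of_real (\<Sum>i<N. (cmod (c i))^2)) UNIV"
proof -
  have f_l2: "l2 (f i)" if "i < N" for i
    using f that by (simp add: orthonormal_sys_def)
  have "((\<lambda>k. \<Sum>i<N. \<Sum>j<N. c i * cnj (c j) * (f i k * cnj (f j k))) has_sum
      (\<Sum>i<N. \<Sum>j<N. c i * cnj (c j) * l2inner (f i) (f j))) UNIV"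
    by (intro has_sum_sum has_sum_cmult_right has_sum_l2inner f_l2) auto
  moreover have "(\<Sum>j<N. c i * cnj (c j) * l2inner (f i) (f j)) = c i * cnj (c i)" if "i < N" for i
  proof -
    have "(\<Sum>j<N. c i * cnj (c j) * l2inner (f i) (f j)) = (\<Sum>j<N. if j = i then c i * cnj (c i) else 0)"
      using f that by (intro sum.cong) (auto simp: orthonormal_sys_def)
    then show ?thesis
      using that by simp
  qed
  moreover have "(\<Sum>i<N. c i * cnj (c i)) = complex_of_real (\<Sum>i<N. (cmod (c i))^2)"
    unfolding of_real_sum by (simp only: complex_norm_square)
  ultimately show ?thesis
    by (simp add: sum_product mult_ac)
qed

text \<open>Bessel's inequality, from \<open>\<parallel>x - \<Sum>\<^sub>i \<langle>x, f\<^sub>i\<rangle> f\<^sub>i\<parallel>\<^sup>2 = \<parallel>x\<parallel>\<^sup>2 - \<Sum>\<^sub>i |\<langle>x, f\<^sub>i\<rangle>|\<^sup>2\<close>; each of the four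
  terms of the expanded square is computed as a series, so that no completeness of \<open>\<ell>\<^sup>2\<close> is needed.\<close>
lemma bessel_inequality:
  assumes x: "l2 x" and f: "orthonormal_sys f N"
  shows "(\<Sum>i<N. (cmod (l2inner x (f i)))^2) \<le> (l2norm x)^2"
proof -
  define c where "c i = l2inner x (f i)" for i
  define s where "s k = (\<Sum>i<N. c i * f i k)" for k
  define C where "C = (\<Sum>i<N. (cmod (c i))^2)"
  have xx: "((\<lambda>k. x k * cnj (x k)) has_sum complex_of_real ((l2norm x)^2)) UNIV"
    using has_sum_l2inner[OF x x] by (simp add: l2inner_self[OF x])
  have xs: "((\<lambda>k. x k * cnj (s k)) has_sum complex_of_real C) UNIV"
  proof -
    have "((\<lambda>k. \<Sum>i<N. cnj (c i) * (x k * cnj (f i k))) has_sum (\<Sum>i<N. cnj (c i) * c i)) UNIV"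
      unfolding c_def using f
      by (intro has_sum_sum has_sum_cmult_right has_sum_l2inner x) (auto simp: orthonormal_sys_def)
    moreover have "(\<Sum>i<N. cnj (c i) * c i) = complex_of_real C"
      unfolding C_def of_real_sum by (simp only: complex_norm_square mult.commute)
    ultimately show ?thesis
      by (simp add: s_def sum_distrib_left mult_ac)
  qed
  have sx: "((\<lambda>k. s k * cnj (x k)) has_sum complex_of_real C) UNIV"
    using has_sum_cnj_iff[THEN iffD2, OF xs] by (simp add: mult.commute)
  have ss: "((\<lambda>k. s k * cnj (s k)) has_sum complex_of_real C) UNIV"
    unfolding s_def C_def by (rule has_sum_orthonormal_combination_squared[OF f])
  have "((\<lambda>k. x k * cnj (x k) - x k * cnj (s k) - s k * cnj (x k) + s k * cnj (s k)) has_sum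
      complex_of_real ((l2norm x)^2 - C)) UNIV"
    using has_sum_add[OF has_sum_diff[OF has_sum_diff[OF xx xs] sx] ss] by simp
  moreover have "x k * cnj (x k) - x k * cnj (s k) - s k * cnj (x k) + s k * cnj (s k)
      = complex_of_real ((cmod (x k - s k))^2)" for k
    by (simp only: complex_norm_square) (simp add: algebra_simps)
  ultimately have "((\<lambda>k. (cmod (x k - s k))^2) has_sum ((l2norm x)^2 - C)) UNIV"
    using has_sum_Re by fastforce
  then have "0 \<le> (l2norm x)^2 - C"
    by (rule has_sum_nonneg) simp
  then show ?thesis
    by (simp add: C_def c_def)
qed

lemma orthonormal_sys_coordinate_bessel:
  assumes "orthonormal_sys e N"
  shows "(\<Sum>i<N. (cmod (e i k))^2) \<le> 1"
  using bessel_inequality[OF l2_basisv assms, of k] by (simp add: l2inner_basisv_left l2norm_basisv)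

text \<open>Bessel's inequality is used twice: for the system \<open>e\<^sub>i\<close> against \<open>U\<^sup>k\<close>, and for the system
  \<open>f\<^sub>i\<close> against \<open>w\<close>.\<close>
lemma sum_orthonormal_coordinates_inner_le:
  assumes e: "orthonormal_sys e N" and f: "orthonormal_sys f N" and "l2 w"
  shows "(\<Sum>i<N. cmod (e i k) * cmod (l2inner w (f i))) \<le> l2norm w"
proof -
  have "(\<Sum>i<N. cmod (e i k) * cmod (l2inner w (f i)))
      \<le> L2_set (\<lambda>i. cmod (e i k)) {..<N} * L2_set (\<lambda>i. cmod (l2inner w (f i))) {..<N}"
    using L2_set_mult_ineq[of "\<lambda>i. cmod (e i k)" "\<lambda>i. cmod (l2inner w (f i))" "{..<N}"] by simp
  also have "\<dots> \<le> 1 * l2norm w"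
  proof (rule mult_mono)
    show "L2_set (\<lambda>i. cmod (e i k)) {..<N} \<le> 1"
      unfolding L2_set_def using orthonormal_sys_coordinate_bessel[OF e] by simp
    have "L2_set (\<lambda>i. cmod (l2inner w (f i))) {..<N} \<le> sqrt ((l2norm w)^2)"
      unfolding L2_set_def using bessel_inequality[OF \<open>l2 w\<close> f] by (rule real_sqrt_le_mono)
    then show "L2_set (\<lambda>i. cmod (l2inner w (f i))) {..<N} \<le> l2norm w"
      by (simp add: l2norm_nonneg)
  qed (auto simp: L2_set_def sum_nonneg)
  finally show ?thesis
    by simp
qed

lemma abs_summable_if_smooth_elem:
  fixes u :: "'n::finite coef"
  assumes "smooth_elem u"
  shows "(\<lambda>k. cmod (u k)) summable_on UNIV"
proof -
  define N where "N = CARD('n) + 1"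
  obtain C where C: "\<And>k. (1 + norm (rvec k)) ^ N * cmod (u k) \<le> C"
    using assms unfolding smooth_elem_def by blast
  have "(\<lambda>k::(int, 'n) vec. C * (1 + norm (rvec k)) powr (- real N)) summable_on UNIV"
    by (intro summable_on_cmult_right summable_on_lattice_weight) (simp add: N_def)
  then show ?thesis
  proof (rule summable_on_comparison_test)
    fix k :: "(int, 'n) vec"
    have pos: "0 < 1 + norm (rvec k)"
      by (simp add: add_pos_nonneg)
    then have "cmod (u k) \<le> C / (1 + norm (rvec k)) ^ N"
      using C[of k] by (simp add: field_simps)
    also have "\<dots> = C * (1 + norm (rvec k)) powr (- real N)"
      using pos by (simp add: powr_minus powr_realpow divide_inverse)
    finally show "cmod (u k) \<le> C * (1 + norm (rvec k)) powr (- real N)" .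
  qed simp
qed

lemma l2_if_abs_summable:
  assumes summable: "(\<lambda>k. cmod (u k)) summable_on UNIV"
  shows "l2 u"
  unfolding l2_def
proof (rule summable_on_comparison_test)
  define B where "B = (\<Sum>\<^sub>\<infinity>k. cmod (u k))"
  show "(\<lambda>k. B * cmod (u k)) summable_on UNIV"
    using summable by (rule summable_on_cmult_right)
  fix k
  have "cmod (u k) \<le> B"
    using finite_sum_le_infsum[OF summable, of "{k}"] by (simp add: B_def)
  then show "(cmod (u k))^2 \<le> B * cmod (u k)"
    by (simp add: power2_eq_square mult_right_mono)
qed simp

lemma l2_if_smooth_elem: "smooth_elem u \<Longrightarrow> l2 u"
  by (rule l2_if_abs_summable[OF abs_summable_if_smooth_elem])

text \<open>In the twisted product \<open>u v = \<Sum>\<^sub>j u\<^sub>j (U\<^sup>j v)\<close> each term has norm \<open>|u\<^sub>j| \<parallel>v\<parallel>\<close>.\<close>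
lemma l2norm_tmult_le:
  fixes u v :: "'n::{finite, linorder} coef"
  assumes u: "(\<lambda>j. cmod (u j)) summable_on UNIV" and v: "l2 v"
  shows "l2norm (tmult \<theta> u v) \<le> (\<Sum>\<^sub>\<infinity>j. cmod (u j)) * l2norm v"
proof -
  define x where "x j l = u j * (v (l - j) * phase \<theta> j (l - j))" for j l
  have shifted: "l2 (\<lambda>l. v (l - j) * phase \<theta> j (l - j))"
    "l2norm (\<lambda>l. v (l - j) * phase \<theta> j (l - j)) = l2norm v" for j
    using l2_shift_unimodular[OF v, of "\<lambda>l. phase \<theta> j (l - j)" j] by simp_all
  have x_l2: "l2 (x j)" and x_norm: "l2norm (x j) = cmod (u j) * l2norm v" for j
    using l2_scale[OF shifted(1), of "u j" j] shifted(2)[of j] by (simp_all add: x_def[abs_def])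
  have "(\<lambda>j. l2norm (x j)) summable_on UNIV"
    unfolding x_norm using u by (rule summable_on_cmult_left)
  from l2_infsum(2)[OF x_l2 this] show ?thesis
    by (simp add: tmult_def x_def mult.assoc x_norm infsum_cmult_left')
qed

lemma tmult_basisv_0: "tmult \<theta> u (basisv 0) = u"
proof
  fix l
  have "tmult \<theta> u (basisv 0) l = (\<Sum>\<^sub>\<infinity>j. if j = l then u l else 0)"
    unfolding tmult_def by (rule infsum_cong) (auto simp: basisv_def phase_def)
  then show "tmult \<theta> u (basisv 0) l = u l"
    by (simp add: infsum_if_eq)
qed

text \<open>Testing the left multiplication by \<open>u\<close> on \<open>U\<^sup>0\<close> gives \<open>\<parallel>u\<parallel>\<^sub>2 \<le> \<parallel>u\<parallel>\<close>; the supremum defining the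
  C*-norm is finite because \<open>\<parallel>u v\<parallel>\<^sub>2 \<le> \<parallel>u\<parallel>\<^sub>1 \<parallel>v\<parallel>\<^sub>2\<close>.\<close>
lemma l2norm_le_cnorm:
  fixes u :: "'n::{finite, linorder} coef"
  assumes "smooth_elem u"
  shows "l2norm u \<le> cnorm \<theta> u"
proof -
  let ?S = "{l2norm (tmult \<theta> u v) | v. l2 v \<and> l2norm v \<le> 1}"
  have u: "(\<lambda>j. cmod (u j)) summable_on UNIV"
    by (rule abs_summable_if_smooth_elem[OF assms])
  have bound: "l2norm (tmult \<theta> u v) \<le> (\<Sum>\<^sub>\<infinity>j. cmod (u j))" if "l2 v" "l2norm v \<le> 1" for v
    using l2norm_tmult_le[OF u \<open>l2 v\<close>, of \<theta>] mult_left_mono[OF \<open>l2norm v \<le> 1\<close>, of "\<Sum>\<^sub>\<infinity>j. cmod (u j)"]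
    by (simp add: infsum_nonneg)
  have "bdd_above ?S"
    by (rule bdd_aboveI[where M = "\<Sum>\<^sub>\<infinity>j. cmod (u j)"]) (use bound in auto)
  moreover have "l2norm u \<in> ?S"
    using l2_basisv[of 0] l2norm_basisv[of 0] tmult_basisv_0[of \<theta> u]
    by (metis (mono_tags, lifting) mem_Collect_eq order_refl)
  ultimately show ?thesis
    unfolding cnorm_def by (rule cSup_upper[rotated])
qed

section \<open>Operators with summable columns\<close>

definition column_op :: "((int, 'n::finite) vec \<Rightarrow> 'n coef) \<Rightarrow> 'n coef \<Rightarrow> 'n coef" where
  "column_op w v = (\<lambda>l. \<Sum>\<^sub>\<infinity>k. v k * w k l)"

context
  fixes w :: "(int, 'n::finite) vec \<Rightarrow> 'n coef"
  assumes columns_l2: "\<And>k. l2 (w k)"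
    and columns_summable: "(\<lambda>k. l2norm (w k)) summable_on UNIV"
begin

lemma column_op_terms:
  assumes "l2 v"
  shows "l2 (\<lambda>l. v k * w k l)" and "(\<lambda>k. l2norm (\<lambda>l. v k * w k l)) summable_on UNIV"
proof -
  show "l2 (\<lambda>l. v k * w k l)"
    by (rule l2_scale(1)[OF columns_l2])
  have "(\<lambda>k. l2norm v * l2norm (w k)) summable_on UNIV"
    using columns_summable by (rule summable_on_cmult_right)
  then show "(\<lambda>k. l2norm (\<lambda>l. v k * w k l)) summable_on UNIV"
  proof (rule summable_on_comparison_test)
    show "l2norm (\<lambda>l. v k * w k l) \<le> l2norm v * l2norm (w k)" for k
      using norm_le_l2norm[OF assms, of k]
      by (simp add: l2_scale(2)[OF columns_l2] l2norm_nonneg mult_right_mono)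
  qed (simp add: l2norm_nonneg)
qed

lemma column_op_summable:
  assumes "l2 v"
  shows "(\<lambda>k. v k * w k l) summable_on UNIV"
proof (rule abs_summable_summable)
  have "(\<lambda>k. l2norm (\<lambda>l. v k * w k l)) summable_on UNIV"
    by (rule column_op_terms(2)[OF assms])
  then show "(\<lambda>k. norm (v k * w k l)) summable_on UNIV"
    by (rule summable_on_comparison_test) (auto intro: norm_le_l2norm column_op_terms(1)[OF assms])
qed

lemma column_op_linear:
  assumes "l2 u" and "l2 v"
  shows "column_op w (\<lambda>k. a * u k + b * v k) = (\<lambda>l. a * column_op w u l + b * column_op w v l)"
proof
  fix l
  have "column_op w (\<lambda>k. a * u k + b * v k) l = (\<Sum>\<^sub>\<infinity>k. a * (u k * w k l) + b * (v k * w k l))"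
    unfolding column_op_def by (simp add: algebra_simps)
  also have "\<dots> = a * column_op w u l + b * column_op w v l"
    using column_op_summable[OF assms(1)] column_op_summable[OF assms(2)]
    by (simp add: column_op_def infsum_add summable_on_cmult_right infsum_cmult_right')
  finally show "column_op w (\<lambda>k. a * u k + b * v k) l = a * column_op w u l + b * column_op w v l" .
qed

lemma l2_column_op:
  assumes "l2 v"
  shows "l2 (column_op w v)"
  unfolding column_op_def using column_op_terms[OF assms] by (rule l2_infsum(1))

lemma column_op_basisv: "column_op w (basisv k) = w k"
proof
  fix l
  have "column_op w (basisv k) l = (\<Sum>\<^sub>\<infinity>j. if j = k then w k l else 0)"
    unfolding column_op_def by (rule infsum_cong) (simp add: basisv_def)
  then show "column_op w (basisv k) l = w k l"
    by (simp add: infsum_if_eq)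
qed

lemma norm_l2inner_column_op_le:
  assumes e: "l2 e" and f: "l2 f"
  shows "cmod (l2inner (column_op w e) f) \<le> (\<Sum>\<^sub>\<infinity>k. cmod (e k) * cmod (l2inner (w k) f))"
proof -
  have inner_term: "l2inner (\<lambda>l. e k * w k l) f = e k * l2inner (w k) f" for k
    by (simp add: l2inner_def mult.assoc infsum_cmult_right')
  have "((\<lambda>k. e k * l2inner (w k) f) has_sum l2inner (column_op w e) f) UNIV"
    using has_sum_l2inner_infsum[OF column_op_terms[OF e] f] by (simp add: inner_term column_op_def)
  moreover have "(\<lambda>k. norm (e k * l2inner (w k) f)) summable_on UNIV"
  proof (rule summable_on_comparison_test)
    show "(\<lambda>k. l2norm e * l2norm (w k) * l2norm f) summable_on UNIV"
      using columns_summable by (intro summable_on_cmult_left summable_on_cmult_right)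
    show "norm (e k * l2inner (w k) f) \<le> l2norm e * l2norm (w k) * l2norm f" for k
      unfolding norm_mult mult.assoc
      using norm_le_l2norm[OF e] norm_l2inner_le[OF columns_l2 f] l2norm_nonneg
      by (intro mult_mono) auto
  qed simp
  ultimately show ?thesis
    using norm_infsum_bound[of "\<lambda>k. e k * l2inner (w k) f" UNIV] by (simp add: infsumI norm_mult)
qed

lemma trace_sum_column_op_le:
  assumes e: "orthonormal_sys e N" and f: "orthonormal_sys f N"
  shows "(\<Sum>i<N. cmod (l2inner (column_op w (e i)) (f i))) \<le> (\<Sum>\<^sub>\<infinity>k. l2norm (w k))"
proof -
  define a where "a i k = cmod (e i k) * cmod (l2inner (w k) (f i))" for i k
  have column_le: "(\<Sum>i<N. a i k) \<le> l2norm (w k)" for k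
    unfolding a_def by (rule sum_orthonormal_coordinates_inner_le[OF e f columns_l2])
  have a_le: "a i k \<le> l2norm (w k)" if "i < N" for i k
    using member_le_sum[of i "{..<N}" "\<lambda>i. a i k"] column_le[of k] that by (force simp: a_def)
  have a_summable: "a i summable_on UNIV" if "i < N" for i
    using columns_summable by (rule summable_on_comparison_test) (use a_le that in \<open>auto simp: a_def\<close>)
  have "(\<Sum>i<N. cmod (l2inner (column_op w (e i)) (f i))) \<le> (\<Sum>i<N. \<Sum>\<^sub>\<infinity>k. a i k)"
    unfolding a_def using orthonormal_sys_l2norm(1)[OF e] orthonormal_sys_l2norm(1)[OF f]
    by (intro sum_mono norm_l2inner_column_op_le) auto
  also have "\<dots> = (\<Sum>\<^sub>\<infinity>k. \<Sum>i<N. a i k)"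
    using a_summable by (subst infsum_sum) auto
  also have "\<dots> \<le> (\<Sum>\<^sub>\<infinity>k. l2norm (w k))"
    using a_summable columns_summable column_le by (intro infsum_mono summable_on_sum) auto
  finally show ?thesis .
qed

lemma trace_class_column_op: "trace_class (column_op w)"
  and trace_norm_column_op_le: "trace_norm (column_op w) \<le> (\<Sum>\<^sub>\<infinity>k. l2norm (w k))"
proof -
  have upper: "t \<le> (\<Sum>\<^sub>\<infinity>k. l2norm (w k))" if "t \<in> trace_sums (column_op w)" for t
    using that trace_sum_column_op_le unfolding trace_sums_def by auto
  have "0 \<in> trace_sums (column_op w)"
    unfolding trace_sums_def orthonormal_sys_def by force
  then show "trace_norm (column_op w) \<le> (\<Sum>\<^sub>\<infinity>k. l2norm (w k))"
    unfolding trace_norm_def using upper by (intro cSup_least) auto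
  have "bdd_above (trace_sums (column_op w))"
    by (rule bdd_aboveI[OF upper])
  then show "trace_class (column_op w)"
    unfolding trace_class_def l2_linear_def using l2_column_op column_op_linear by auto
qed

lemma has_sum_op_trace_column_op: "((\<lambda>k. w k k) has_sum op_trace (column_op w)) UNIV"
proof -
  have "(\<lambda>k. norm (w k k)) summable_on UNIV"
    using columns_summable by (rule summable_on_comparison_test) (auto intro: norm_le_l2norm columns_l2)
  then show ?thesis
    unfolding op_trace_def by (simp add: column_op_basisv l2inner_basisv_right abs_summable_summable)
qed

end

lemma column_op_add_columns:
  assumes "\<And>k. l2 (w k)" "(\<lambda>k. l2norm (w k)) summable_on UNIV"
    and "\<And>k. l2 (w' k)" "(\<lambda>k. l2norm (w' k)) summable_on UNIV"
    and "l2 v"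
  shows "column_op (\<lambda>k l. a * w k l + b * w' k l) v = (\<lambda>l. a * column_op w v l + b * column_op w' v l)"
proof
  fix l
  have "column_op (\<lambda>k l. a * w k l + b * w' k l) v l = (\<Sum>\<^sub>\<infinity>k. a * (v k * w k l) + b * (v k * w' k l))"
    unfolding column_op_def by (simp add: algebra_simps)
  also have "\<dots> = a * column_op w v l + b * column_op w' v l"
    using column_op_summable[OF assms(1,2,5)] column_op_summable[OF assms(3,4,5)]
    by (simp add: column_op_def infsum_add summable_on_cmult_right infsum_cmult_right')
  finally show "column_op (\<lambda>k l. a * w k l + b * w' k l) v l = a * column_op w v l + b * column_op w' v l" .
qed

section \<open>Pseudodifferential operators of order below \<open>-n\<close>\<close>

text \<open>The image \<open>\<rho>(k) U\<^sup>k\<close> of \<open>U\<^sup>k\<close> under \<open>P\<^sub>\<rho>\<close>; the phase comes from \<open>U\<^sup>j U\<^sup>k = phase \<theta> j k U\<^sup>j\<^sup>+\<^sup>k\<close>.\<close>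
definition psido_column ::
    "((real, 'n::{finite, linorder}) vec, 'n) vec \<Rightarrow> ((real, 'n) vec \<Rightarrow> 'n coef) \<Rightarrow> (int, 'n) vec \<Rightarrow> 'n coef" where
  "psido_column \<theta> \<rho> k = (\<lambda>l. \<rho> (rvec k) (l - k) * phase \<theta> (l - k) k)"

lemma psido_eq_column_op: "psido \<theta> \<rho> = column_op (psido_column \<theta> \<rho>)"
  by (simp add: fun_eq_iff psido_def column_op_def psido_column_def mult.assoc)

lemma psido_column_linear:
  "psido_column \<theta> (\<lambda>\<xi> k. a * \<rho> \<xi> k + b * \<sigma> \<xi> k)
     = (\<lambda>k l. a * psido_column \<theta> \<rho> k l + b * psido_column \<theta> \<sigma> k l)"
  by (simp add: fun_eq_iff psido_column_def algebra_simps)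

lemma psido_column_diagonal: "psido_column \<theta> \<rho> k k = tau (\<rho> (rvec k))"
  by (simp add: psido_column_def phase_def tau_def)

lemma
  assumes "l2 (\<rho> (rvec k))"
  shows l2_psido_column: "l2 (psido_column \<theta> \<rho> k)"
    and l2norm_psido_column: "l2norm (psido_column \<theta> \<rho> k) = l2norm (\<rho> (rvec k))"
  using l2_shift_unimodular[OF assms, of "\<lambda>l. phase \<theta> (l - k) k" k]
  by (simp_all add: psido_column_def[abs_def])

lemma mdelta_zero [simp]: "mdelta (\<lambda>_. 0) u = u"
  by (simp add: mdelta_def)

lemma
  assumes "\<rho> \<in> symbol_class \<theta> m"
  shows symbol_class_smooth: "smooth_elem (\<rho> \<xi>)"
    and symbol_class_order_bound: "\<exists>C. \<forall>\<xi>. cnorm \<theta> (\<rho> \<xi>) \<le> C * (1 + norm \<xi>) powr m"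
    and sderiv_zero: "sderiv \<theta> \<rho> (\<lambda>_. 0) = \<rho>"
proof -
  obtain D where D: "deriv_family \<theta> \<rho> D"
    and bounds: "\<And>\<alpha> \<beta>. \<exists>C. \<forall>\<xi>. cnorm \<theta> (mdelta \<alpha> (D \<beta> \<xi>)) \<le> C * (1 + norm \<xi>) powr (m - real (sum \<beta> UNIV))"
    using assms unfolding symbol_class_def by blast
  have "D (\<lambda>_. 0) = \<rho>"
    using D by (simp add: deriv_family_def)
  then show "smooth_elem (\<rho> \<xi>)" and "\<exists>C. \<forall>\<xi>. cnorm \<theta> (\<rho> \<xi>) \<le> C * (1 + norm \<xi>) powr m"
    using D bounds[of "\<lambda>_. 0" "\<lambda>_. 0"] unfolding deriv_family_def by auto
  have "deriv_family \<theta> \<rho> (sderiv \<theta> \<rho>)"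
    unfolding sderiv_def by (rule someI[of "deriv_family \<theta> \<rho>", OF D])
  then show "sderiv \<theta> \<rho> (\<lambda>_. 0) = \<rho>"
    by (simp add: deriv_family_def)
qed

lemma symbol_class_l2: "\<rho> \<in> symbol_class \<theta> m \<Longrightarrow> l2 (\<rho> \<xi>)"
  by (rule l2_if_smooth_elem[OF symbol_class_smooth])

lemma l2norm_le_sym_seminorm:
  assumes "\<rho> \<in> symbol_class \<theta> m"
  shows "l2norm (\<rho> \<xi>) \<le> sym_seminorm \<theta> m (\<lambda>_. 0) (\<lambda>_. 0) \<rho> * (1 + norm \<xi>) powr m"
proof -
  have pos: "0 < (1 + norm \<eta>) powr m" for \<eta> :: "(real, 'a) vec"
  proof -
    have "1 + norm \<eta> \<noteq> 0"
      using norm_ge_zero[of \<eta>] by linarith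
    then show ?thesis
      by simp
  qed
  obtain C where C: "\<And>\<eta>. cnorm \<theta> (\<rho> \<eta>) \<le> C * (1 + norm \<eta>) powr m"
    using symbol_class_order_bound[OF assms] by blast
  have "bdd_above (range (\<lambda>\<eta>. cnorm \<theta> (\<rho> \<eta>) / (1 + norm \<eta>) powr m))"
    using C pos by (intro bdd_aboveI2[where M = C]) (simp add: divide_le_eq)
  then have "cnorm \<theta> (\<rho> \<xi>) / (1 + norm \<xi>) powr m \<le> (SUP \<eta>. cnorm \<theta> (\<rho> \<eta>) / (1 + norm \<eta>) powr m)"
    by (rule cSUP_upper[OF UNIV_I])
  also have "\<dots> = sym_seminorm \<theta> m (\<lambda>_. 0) (\<lambda>_. 0) \<rho>"
    by (simp add: sym_seminorm_def sderiv_zero[OF assms])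
  finally have "cnorm \<theta> (\<rho> \<xi>) / (1 + norm \<xi>) powr m \<le> sym_seminorm \<theta> m (\<lambda>_. 0) (\<lambda>_. 0) \<rho>" .
  then have "cnorm \<theta> (\<rho> \<xi>) \<le> sym_seminorm \<theta> m (\<lambda>_. 0) (\<lambda>_. 0) \<rho> * (1 + norm \<xi>) powr m"
    using pos[of \<xi>] by (simp add: divide_le_eq)
  then show ?thesis
    using l2norm_le_cnorm[OF symbol_class_smooth[OF assms]] by (rule order_trans[rotated])
qed

lemma
  fixes \<theta> :: "((real, 'n::{finite, linorder}) vec, 'n) vec"
  assumes \<rho>: "\<rho> \<in> symbol_class \<theta> m" and m: "m < - real CARD('n)"
  shows summable_psido_column_norms: "(\<lambda>k. l2norm (psido_column \<theta> \<rho> k)) summable_on UNIV"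
    and infsum_psido_column_norms_le:
      "(\<Sum>\<^sub>\<infinity>k. l2norm (psido_column \<theta> \<rho> k))
         \<le> (\<Sum>\<^sub>\<infinity>k::(int, 'n) vec. (1 + norm (rvec k)) powr m) * sym_seminorm \<theta> m (\<lambda>_. 0) (\<lambda>_. 0) \<rho>"
proof -
  let ?p = "sym_seminorm \<theta> m (\<lambda>_. 0) (\<lambda>_. 0) \<rho>"
  have weights: "(\<lambda>k::(int, 'n) vec. ?p * (1 + norm (rvec k)) powr m) summable_on UNIV"
    using m by (intro summable_on_cmult_right summable_on_lattice_weight)
  have le: "l2norm (psido_column \<theta> \<rho> k) \<le> ?p * (1 + norm (rvec k)) powr m" for k
    using l2norm_le_sym_seminorm[OF \<rho>] by (simp add: l2norm_psido_column symbol_class_l2[OF \<rho>])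
  show summable: "(\<lambda>k. l2norm (psido_column \<theta> \<rho> k)) summable_on UNIV"
    using weights le by (rule summable_on_comparison_test) (simp add: l2norm_nonneg)
  have "(\<Sum>\<^sub>\<infinity>k. l2norm (psido_column \<theta> \<rho> k)) \<le> (\<Sum>\<^sub>\<infinity>k::(int, 'n) vec. ?p * (1 + norm (rvec k)) powr m)"
    using summable weights le by (rule infsum_mono)
  also have "\<dots> = (\<Sum>\<^sub>\<infinity>k::(int, 'n) vec. (1 + norm (rvec k)) powr m) * ?p"
    unfolding infsum_cmult_right' by (rule mult.commute)
  finally show "(\<Sum>\<^sub>\<infinity>k. l2norm (psido_column \<theta> \<rho> k)) \<le> (\<Sum>\<^sub>\<infinity>k::(int, 'n) vec. (1 + norm (rvec k)) powr m) * ?p" .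
qed

theorem proposition13p13:
  fixes \<theta> :: "((real, 'n::{finite,linorder}) vec, 'n) vec" and m :: real
  assumes "CARD('n) \<ge> 2"
    and "\<forall>j k. \<theta>$j$k = - \<theta>$k$j"
    and "m < - real CARD('n)"
  shows "(\<forall>\<rho>\<in>symbol_class \<theta> m. trace_class (psido \<theta> \<rho>))
     \<and> (\<forall>\<rho>\<in>symbol_class \<theta> m. \<forall>\<sigma>\<in>symbol_class \<theta> m. \<forall>a b v. l2 v \<longrightarrow>
          psido \<theta> (\<lambda>\<xi> k. a * \<rho> \<xi> k + b * \<sigma> \<xi> k) v
            = (\<lambda>l. a * psido \<theta> \<rho> v l + b * psido \<theta> \<sigma> v l))
     \<and> (\<exists>F C. finite F \<and> (\<forall>\<rho>\<in>symbol_class \<theta> m.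
          trace_norm (psido \<theta> \<rho>) \<le> C * (\<Sum>(\<alpha>, \<beta>)\<in>F. sym_seminorm \<theta> m \<alpha> \<beta> \<rho>)))
     \<and> (\<forall>\<rho>\<in>symbol_class \<theta> m.
          ((\<lambda>k. tau (\<rho> (rvec k))) has_sum op_trace (psido \<theta> \<rho>)) UNIV)"
proof -
  note m = \<open>m < - real CARD('n)\<close>
  have l2_columns: "\<And>k. l2 (psido_column \<theta> \<rho> k)" if "\<rho> \<in> symbol_class \<theta> m" for \<rho>
    by (rule l2_psido_column[OF symbol_class_l2[OF that]])
  note columns = l2_columns summable_psido_column_norms[OF _ m]
  have "trace_norm (psido \<theta> \<rho>)
      \<le> (\<Sum>\<^sub>\<infinity>k::(int, 'n) vec. (1 + norm (rvec k)) powr m) * sym_seminorm \<theta> m (\<lambda>_. 0) (\<lambda>_. 0) \<rho>"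
    if "\<rho> \<in> symbol_class \<theta> m" for \<rho>
    unfolding psido_eq_column_op
    using trace_norm_column_op_le[OF columns[OF that]] infsum_psido_column_norms_le[OF that m] by simp
  then have "\<exists>F C. finite F \<and> (\<forall>\<rho>\<in>symbol_class \<theta> m.
      trace_norm (psido \<theta> \<rho>) \<le> C * (\<Sum>(\<alpha>, \<beta>)\<in>F. sym_seminorm \<theta> m \<alpha> \<beta> \<rho>))"
    by (intro exI[of _ "{(\<lambda>_. 0, \<lambda>_. 0)}"]) auto
  moreover have "psido \<theta> (\<lambda>\<xi> k. a * \<rho> \<xi> k + b * \<sigma> \<xi> k) v = (\<lambda>l. a * psido \<theta> \<rho> v l + b * psido \<theta> \<sigma> v l)"
    if "\<rho> \<in> symbol_class \<theta> m" "\<sigma> \<in> symbol_class \<theta> m" "l2 v" for \<rho> \<sigma> a b v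
    unfolding psido_eq_column_op psido_column_linear
    using column_op_add_columns[OF columns[OF that(1)] columns[OF that(2)] that(3)] by simp
  ultimately show ?thesis
    using trace_class_column_op[OF columns] has_sum_op_trace_column_op[OF columns]
    by (simp add: psido_eq_column_op psido_column_diagonal)
qed

end
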